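(* For $\mathbb P=\mathrm{Cauchy}(l_1,s_1)$, $\mathbb Q=\mathrm{Cauchy}(l_2,s_2)$ ($l_i\in\mathbb R$, $s_i>0$), one has $\rho_\alpha(\mathbb P,\mathbb Q)=\rho_{1-\alpha}(\mathbb P,\mathbb Q)$ for all $\alpha\in[0,1]$. Consequently, if $\mathbb P\ne\mathbb Q$, the maximiser of $\alpha\mapsto D_{B,\alpha}(\mathbb P,\mathbb Q)$ over $[0,1]$ is unique and equals $\alpha^*=1/2$, so $D_C(\mathbb P,\mathbb Q)=D_{B,1/2}(\mathbb P,\mathbb Q)$; if $\mathbb P=\mathbb Q$, $D_{B,\alpha}\equiv0$ and every $\alpha\in[0,1]$ is a maximiser.
   Context: Cauchy density $p_{l,s}(x)=\frac{s}{\pi(s^2+(x-l)^2)}$ on $\mathbb R$ w.r.t. Lebesgue measure. Unweighted quantities: $\rho_\alpha(\mathbb P,\mathbb Q)=\int_{\mathbb R}p_{l_1,s_1}(x)^\alpha p_{l_2,s_2}(x)^{1-\alpha}\,\mathrm dx$, $D_{B,\alpha}=-\ln\rho_\alpha$, $D_C(\mathbb P,\mathbb Q)=\max_{\alpha\in[0,1]}D_{B,\alpha}(\mathbb P,\mathbb Q)$. *)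

theory Defs
  imports "HOL-Analysis.Analysis"
begin

definition cauchy_pdf :: "real \<Rightarrow> real \<Rightarrow> real \<Rightarrow> real" where
  "cauchy_pdf l s x = s / (pi * (s\<^sup>2 + (x - l)\<^sup>2))"

definition rho :: "real \<Rightarrow> real \<Rightarrow> real \<Rightarrow> real \<Rightarrow> real \<Rightarrow> real" where
  "rho \<alpha> l1 s1 l2 s2 =
     (\<integral>x. (cauchy_pdf l1 s1 x) powr \<alpha> * (cauchy_pdf l2 s2 x) powr (1 - \<alpha>) \<partial>lborel)"

definition D_B :: "real \<Rightarrow> real \<Rightarrow> real \<Rightarrow> real \<Rightarrow> real \<Rightarrow> real" where
  "D_B \<alpha> l1 s1 l2 s2 = - ln (rho \<alpha> l1 s1 l2 s2)"

definition D_C :: "real \<Rightarrow> real \<Rightarrow> real \<Rightarrow> real \<Rightarrow> real" where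
  "D_C l1 s1 l2 s2 = (SUP \<alpha>\<in>{0..1}. D_B \<alpha> l1 s1 l2 s2)"

end

theory Submission
  imports Defs "HOL-Probability.Sinc_Integral"
begin

text \<open>
  Write \<open>\<rho>(\<alpha>; f, g) = \<integral> f\<^sup>\<alpha> g\<^sup>1\<^sup>-\<^sup>\<alpha>\<close>. Trivially \<open>\<rho>(1 - \<alpha>; f, g) = \<rho>(\<alpha>; g, f)\<close>, so the
  symmetry in \<open>\<alpha>\<close> says that \<open>\<rho>\<close> does not change when the two densities are exchanged.
  For two Cauchy densities the exchange is realised by a change of variables: the reflection
  about \<open>(l1 + l2) / 2\<close> if \<open>s1 = s2\<close>, and otherwise the inversion in a circle centred on
  the real line, i.e. the hyperbolic reflection of the upper half-plane that swaps the points
  \<open>l1 + i s1\<close> and \<open>l2 + i s2\<close>.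

  Given the symmetry, \<open>\<rho>(1/2; f, g) = \<integral> sqrt (f g)\<close> is at most the mean of \<open>\<rho>(\<alpha>; f, g)\<close>
  and \<open>\<rho>(1 - \<alpha>; f, g)\<close> by pointwise AM-GM, strictly wherever \<open>f \<noteq> g\<close> and \<open>\<alpha> \<noteq> 1/2\<close>. By
  continuity that happens on an interval, so \<open>\<rho>(1/2) < \<rho>(\<alpha>)\<close>, and \<open>\<alpha> = 1/2\<close> is the unique
  maximiser of \<open>D\<^sub>B = - ln \<rho>\<close>.
\<close>

section \<open>Chernoff coefficients of positive integrable functions\<close>

definition chernoff_coeff :: "(real \<Rightarrow> real) \<Rightarrow> (real \<Rightarrow> real) \<Rightarrow> real \<Rightarrow> real" where
  "chernoff_coeff f g \<alpha> = (\<integral>x. f x powr \<alpha> * g x powr (1 - \<alpha>) \<partial>lborel)"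

lemma chernoff_coeff_commute: "chernoff_coeff g f \<alpha> = chernoff_coeff f g (1 - \<alpha>)"
  unfolding chernoff_coeff_def by (simp add: mult.commute)

lemma chernoff_coeff_self:
  assumes "\<And>x. f x > 0"
  shows "chernoff_coeff f f \<alpha> = (\<integral>x. f x \<partial>lborel)"
  unfolding chernoff_coeff_def
  by (intro Bochner_Integration.integral_cong) (simp_all add: powr_add[symmetric] abs_of_pos assms)

lemma integral_pos_if_pos_on_ball:
  fixes Z :: "real \<Rightarrow> real"
  assumes Z: "integrable lborel Z" "\<And>x. Z x \<ge> 0"
    and e: "e > 0" and pos: "\<And>x. x \<in> ball x0 e \<Longrightarrow> Z x > 0"
  shows "(\<integral>x. Z x \<partial>lborel) > 0"
proof -
  have "(\<integral>x. Z x \<partial>lborel) \<noteq> 0"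
  proof
    assume "(\<integral>x. Z x \<partial>lborel) = 0"
    then have "AE x in lborel. Z x = 0"
      using integral_nonneg_eq_0_iff_AE[OF Z(1)] Z(2) by simp
    then have "AE x in lborel. x \<notin> ball x0 e"
      by eventually_elim (use pos in force)
    then have "emeasure lborel (ball x0 e) = 0"
      by (subst (asm) AE_iff_measurable[of "ball x0 e"]) auto
    then show False
      using e by (simp add: ball_eq_greaterThanLessThan)
  qed
  then show ?thesis
    using Z(2) by (simp add: order_less_le)
qed

lemma integrable_powr_mix:
  fixes f g :: "real \<Rightarrow> real"
  assumes f: "integrable lborel f" "\<And>x. f x > 0" and g: "integrable lborel g" "\<And>x. g x > 0"
    and \<alpha>: "0 \<le> \<alpha>" "\<alpha> \<le> 1"
  shows "integrable lborel (\<lambda>x. f x powr \<alpha> * g x powr (1 - \<alpha>))"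
proof (rule Bochner_Integration.integrable_bound)
  show "integrable lborel (\<lambda>x. \<alpha> * f x + (1 - \<alpha>) * g x)"
    using f g by auto
  have [measurable]: "f \<in> borel_measurable lborel" "g \<in> borel_measurable lborel"
    using f g by auto
  show "(\<lambda>x. f x powr \<alpha> * g x powr (1 - \<alpha>)) \<in> borel_measurable lborel"
    by measurable
  show "AE x in lborel. norm (f x powr \<alpha> * g x powr (1 - \<alpha>)) \<le> norm (\<alpha> * f x + (1 - \<alpha>) * g x)"
  proof (rule AE_I2)
    fix x
    have "f x powr \<alpha> * g x powr (1 - \<alpha>) \<le> \<alpha> * f x + (1 - \<alpha>) * g x"
      using Youngs_inequality_0 f g \<alpha> by simp
    then show "norm (f x powr \<alpha> * g x powr (1 - \<alpha>)) \<le> norm (\<alpha> * f x + (1 - \<alpha>) * g x)"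
      using f g \<alpha> by simp
  qed
qed

lemma chernoff_coeff_pos:
  fixes f g :: "real \<Rightarrow> real"
  assumes f: "integrable lborel f" "\<And>x. f x > 0" and g: "integrable lborel g" "\<And>x. g x > 0"
    and \<alpha>: "0 \<le> \<alpha>" "\<alpha> \<le> 1"
  shows "chernoff_coeff f g \<alpha> > 0"
proof -
  have "f x powr \<alpha> * g x powr (1 - \<alpha>) > 0" for x
    using f(2)[of x] g(2)[of x] by simp
  then show ?thesis
    unfolding chernoff_coeff_def
    by (intro integral_pos_if_pos_on_ball[OF integrable_powr_mix[OF f g \<alpha>] _ zero_less_one, of 0])
      (simp_all add: less_imp_le)
qed

lemma absolutely_integrable_on_UNIV_if_integrable_lborel:
  fixes h :: "real \<Rightarrow> real"
  assumes "integrable lborel h"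
  shows "h absolutely_integrable_on UNIV"
  using assms unfolding absolutely_integrable_on_def set_integrable_def
  by (simp add: integrable_completion borel_measurable_integrable)

lemma chernoff_coeff_swap:
  fixes f g T T' :: "real \<Rightarrow> real"
  assumes S: "negligible (- S)"
    and T: "\<And>x. x \<in> S \<Longrightarrow> (T has_real_derivative T' x) (at x within S)"
      "inj_on T S" "T ` S = S"
    and fT: "\<And>x. x \<in> S \<Longrightarrow> \<bar>T' x\<bar> * f (T x) = g x"
    and gT: "\<And>x. x \<in> S \<Longrightarrow> \<bar>T' x\<bar> * g (T x) = f x"
    and f: "integrable lborel f" "\<And>x. f x > 0" and g: "integrable lborel g" "\<And>x. g x > 0"
    and \<alpha>: "0 \<le> \<alpha>" "\<alpha> \<le> 1"
  shows "chernoff_coeff f g \<alpha> = chernoff_coeff g f \<alpha>"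
proof -
  define F where "F x = f x powr \<alpha> * g x powr (1 - \<alpha>)" for x
  define G where "G x = g x powr \<alpha> * f x powr (1 - \<alpha>)" for x
  have F: "integrable lborel F" and G: "integrable lborel G"
    unfolding F_def G_def using \<alpha> by (auto intro!: integrable_powr_mix f g)
  \<comment> \<open>the Jacobian splits between the two factors because the exponents add up to 1\<close>
  have transport: "\<bar>T' x\<bar> * F (T x) = G x" if "x \<in> S" for x
  proof -
    have J: "\<bar>T' x\<bar> > 0"
      using fT[OF that] f(2)[of "T x"] g(2)[of x] by (metis abs_ge_zero less_eq_real_def mult_zero_left)
    have "\<bar>T' x\<bar> = \<bar>T' x\<bar> powr \<alpha> * \<bar>T' x\<bar> powr (1 - \<alpha>)"
      using J by (simp add: powr_add[symmetric])
    then have "\<bar>T' x\<bar> * F (T x) = (\<bar>T' x\<bar> * f (T x)) powr \<alpha> * (\<bar>T' x\<bar> * g (T x)) powr (1 - \<alpha>)"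
      unfolding F_def using J f(2) g(2) by (simp add: powr_mult less_imp_le)
    then show ?thesis
      unfolding G_def fT[OF that] gT[OF that] by simp
  qed
  have S_lebesgue: "S \<in> sets lebesgue"
    using negligible_imp_sets[OF S] by (metis Compl_in_sets_lebesgue double_complement)
  have F_S: "F absolutely_integrable_on S"
    by (rule absolutely_integrable_spike_set[OF absolutely_integrable_on_UNIV_if_integrable_lborel[OF F]])
      (auto intro: negligible_subset[OF S])
  have "chernoff_coeff f g \<alpha> = integral UNIV F"
    unfolding chernoff_coeff_def F_def integral_lborel[OF F, unfolded F_def] ..
  also have "\<dots> = integral S F"
    by (rule integral_spike_set) (auto intro: negligible_subset[OF S])
  also have "\<dots> = integral S (\<lambda>x. \<bar>T' x\<bar> * F (T x))"
    using has_absolute_integral_change_of_variables_1'[OF S_lebesgue T(1,2), of F "integral S F"] T(3) F_S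
    by simp
  also have "\<dots> = integral S G"
    by (rule integral_cong) (rule transport)
  also have "\<dots> = integral UNIV G"
    by (rule integral_spike_set) (auto intro: negligible_subset[OF S])
  also have "\<dots> = chernoff_coeff g f \<alpha>"
    unfolding chernoff_coeff_def G_def integral_lborel[OF G, unfolded G_def] ..
  finally show ?thesis .
qed

lemma chernoff_coeff_swap_by_reflection:
  fixes f g :: "real \<Rightarrow> real"
  assumes fg: "\<And>y. f (c - y) = g y" and gf: "\<And>y. g (c - y) = f y"
    and f: "integrable lborel f" "\<And>x. f x > 0" and g: "integrable lborel g" "\<And>x. g x > 0"
    and \<alpha>: "0 \<le> \<alpha>" "\<alpha> \<le> 1"
  shows "chernoff_coeff f g \<alpha> = chernoff_coeff g f \<alpha>"
proof (rule chernoff_coeff_swap[where S = UNIV and T = "\<lambda>y. c - y" and T' = "\<lambda>_. -1", OF _ _ _ _ _ _ f g \<alpha>])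
  show "((\<lambda>y. c - y) has_real_derivative -1) (at x within UNIV)" for x
    by (auto intro!: derivative_eq_intros)
  show "inj_on (\<lambda>y. c - y) UNIV"
    by (simp add: inj_on_def)
  show "(\<lambda>y. c - y) ` UNIV = UNIV"
    by (rule surjI[of _ "\<lambda>y. c - y"]) simp
  show "\<bar>-1\<bar> * f (c - x) = g x" "\<bar>-1\<bar> * g (c - x) = f x" for x :: real
    by (simp_all add: fg gf)
qed simp

lemma chernoff_coeff_swap_by_inversion:
  fixes f g :: "real \<Rightarrow> real"
  assumes R: "R > 0"
    and fg: "\<And>y. y \<noteq> m \<Longrightarrow> R / (y - m)\<^sup>2 * f (m + R / (y - m)) = g y"
    and gf: "\<And>y. y \<noteq> m \<Longrightarrow> R / (y - m)\<^sup>2 * g (m + R / (y - m)) = f y"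
    and f: "integrable lborel f" "\<And>x. f x > 0" and g: "integrable lborel g" "\<And>x. g x > 0"
    and \<alpha>: "0 \<le> \<alpha>" "\<alpha> \<le> 1"
  shows "chernoff_coeff f g \<alpha> = chernoff_coeff g f \<alpha>"
proof (rule chernoff_coeff_swap[where S = "- {m}" and T = "\<lambda>y. m + R / (y - m)"
      and T' = "\<lambda>y. - R / (y - m)\<^sup>2", OF _ _ _ _ _ _ f g \<alpha>])
  show "((\<lambda>y. m + R / (y - m)) has_real_derivative - R / (x - m)\<^sup>2) (at x within - {m})"
    if "x \<in> - {m}" for x
    using that by (auto intro!: derivative_eq_intros simp: power2_eq_square)
  show "inj_on (\<lambda>y. m + R / (y - m)) (- {m})"
    using R by (auto simp: inj_on_def field_simps)
  have maps_to: "m + R / (y - m) \<noteq> m" if "y \<noteq> m" for y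
    using that R by simp
  have involution: "m + R / ((m + R / (y - m)) - m) = y" if "y \<noteq> m" for y
    using that R by simp
  show "(\<lambda>y. m + R / (y - m)) ` (- {m}) = - {m}"
  proof
    show "(\<lambda>y. m + R / (y - m)) ` (- {m}) \<subseteq> - {m}"
    proof (rule image_subsetI)
      fix y :: real
      assume "y \<in> - {m}"
      then show "m + R / (y - m) \<in> - {m}"
        using maps_to by simp
    qed
    show "- {m} \<subseteq> (\<lambda>y. m + R / (y - m)) ` (- {m})"
    proof
      fix y :: real
      assume y: "y \<in> - {m}"
      then have "y = (\<lambda>y. m + R / (y - m)) (m + R / (y - m))"
        using involution by simp
      moreover have "m + R / (y - m) \<in> - {m}"
        using y maps_to by simp
      ultimately show "y \<in> (\<lambda>y. m + R / (y - m)) ` (- {m})"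
        by (rule rev_image_eqI[rotated])
    qed
  qed
  show "\<bar>- R / (x - m)\<^sup>2\<bar> * f (m + R / (x - m)) = g x"
    and "\<bar>- R / (x - m)\<^sup>2\<bar> * g (m + R / (x - m)) = f x" if "x \<in> - {m}" for x
    using that R fg gf by auto
qed simp

lemma arith_geo_mean_sqrt_strict:
  fixes x y :: real
  assumes "x \<ge> 0" "y \<ge> 0" "x \<noteq> y"
  shows "sqrt (x * y) < (x + y) / 2"
proof -
  have "sqrt x \<noteq> sqrt y"
    using assms by simp
  then have "0 < (sqrt x - sqrt y)\<^sup>2 / 2"
    by simp
  also have "\<dots> = (x + y) / 2 - sqrt (x * y)"
    using assms by (simp add: power2_diff real_sqrt_mult)
  finally show ?thesis
    by simp
qed

lemma powr_mixes_mult: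
  fixes p q :: real
  assumes "p > 0" "q > 0"
  shows "(p powr \<alpha> * q powr (1 - \<alpha>)) * (q powr \<alpha> * p powr (1 - \<alpha>)) = p * q"
proof -
  have "(p powr \<alpha> * q powr (1 - \<alpha>)) * (q powr \<alpha> * p powr (1 - \<alpha>))
      = (p powr \<alpha> * p powr (1 - \<alpha>)) * (q powr \<alpha> * q powr (1 - \<alpha>))"
    by (simp only: ac_simps)
  also have "\<dots> = p * q"
    using assms by (simp flip: powr_add)
  finally show ?thesis .
qed

lemma powr_mixes_neq:
  fixes p q :: real
  assumes "p > 0" "q > 0" "p \<noteq> q" "\<alpha> \<noteq> 1/2"
  shows "p powr \<alpha> * q powr (1 - \<alpha>) \<noteq> q powr \<alpha> * p powr (1 - \<alpha>)"
proof
  assume "p powr \<alpha> * q powr (1 - \<alpha>) = q powr \<alpha> * p powr (1 - \<alpha>)"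
  then have "ln (p powr \<alpha> * q powr (1 - \<alpha>)) = ln (q powr \<alpha> * p powr (1 - \<alpha>))"
    by simp
  then have "\<alpha> * ln p + (1 - \<alpha>) * ln q = \<alpha> * ln q + (1 - \<alpha>) * ln p"
    using assms by (simp add: ln_mult ln_powr)
  then have "(2 * \<alpha> - 1) * (ln p - ln q) = 0"
    by (simp add: algebra_simps)
  then show False
    using assms by simp
qed

lemma chernoff_coeff_half:
  assumes "\<And>x. f x > 0" "\<And>x. g x > 0"
  shows "chernoff_coeff f g (1/2) = (\<integral>x. sqrt (f x * g x) \<partial>lborel)"
  unfolding chernoff_coeff_def
  by (intro Bochner_Integration.integral_cong)
    (simp_all add: powr_half_sqrt less_imp_le assms real_sqrt_mult)

lemma chernoff_coeff_half_less:
  fixes f g :: "real \<Rightarrow> real"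
  assumes f: "integrable lborel f" "\<And>x. f x > 0" "continuous_on UNIV f"
    and g: "integrable lborel g" "\<And>x. g x > 0" "continuous_on UNIV g"
    and "f \<noteq> g"
    and sym: "chernoff_coeff f g \<alpha> = chernoff_coeff g f \<alpha>"
    and \<alpha>: "0 \<le> \<alpha>" "\<alpha> \<le> 1" "\<alpha> \<noteq> 1/2"
  shows "chernoff_coeff f g (1/2) < chernoff_coeff f g \<alpha>"
proof -
  define F where "F x = f x powr \<alpha> * g x powr (1 - \<alpha>)" for x
  define G where "G x = g x powr \<alpha> * f x powr (1 - \<alpha>)" for x
  define Z where "Z x = (F x + G x) / 2 - sqrt (f x * g x)" for x
  have F: "integrable lborel F" and G: "integrable lborel G"
    unfolding F_def G_def using \<alpha> by (auto intro!: integrable_powr_mix f g)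
  have H: "integrable lborel (\<lambda>x. sqrt (f x * g x))"
    using integrable_powr_mix[OF f(1,2) g(1,2), of "1/2"] f(2) g(2)
    by (simp add: powr_half_sqrt less_imp_le real_sqrt_mult)
  have FG_pos: "F x > 0" "G x > 0" for x
    unfolding F_def G_def using f(2)[of x] g(2)[of x] by simp_all
  have FG: "sqrt (f x * g x) = sqrt (F x * G x)" for x
    unfolding F_def G_def using f(2) g(2) by (simp add: powr_mixes_mult)
  have Z_nonneg: "Z x \<ge> 0" for x
    unfolding Z_def FG using arith_geo_mean_sqrt[of "F x" "G x"] FG_pos[of x] by simp
  obtain x0 where "f x0 \<noteq> g x0"
    using \<open>f \<noteq> g\<close> by blast
  moreover have "open {x. f x \<noteq> g x}"
    using f(3) g(3) by (rule open_Collect_neq)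
  ultimately obtain e where e: "e > 0" "ball x0 e \<subseteq> {x. f x \<noteq> g x}"
    using open_contains_ball by blast
  have Z_pos: "Z x > 0" if "x \<in> ball x0 e" for x
  proof -
    have "f x \<noteq> g x"
      using that e(2) by blast
    then have "F x \<noteq> G x"
      unfolding F_def G_def using f(2) g(2) \<alpha>(3) by (intro powr_mixes_neq)
    then show ?thesis
      unfolding Z_def FG using arith_geo_mean_sqrt_strict[of "F x" "G x"] FG_pos[of x] by simp
  qed
  have "integrable lborel Z"
    unfolding Z_def using F G H by auto
  then have "0 < (\<integral>x. Z x \<partial>lborel)"
    using Z_nonneg e(1) Z_pos by (rule integral_pos_if_pos_on_ball)
  also have "(\<integral>x. Z x \<partial>lborel) = ((\<integral>x. F x \<partial>lborel) + (\<integral>x. G x \<partial>lborel)) / 2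
      - (\<integral>x. sqrt (f x * g x) \<partial>lborel)"
    unfolding Z_def using F G H by simp
  also have "\<dots> = chernoff_coeff f g \<alpha> - chernoff_coeff f g (1/2)"
    using sym unfolding chernoff_coeff_half[OF f(2) g(2)]
    by (simp add: chernoff_coeff_def F_def G_def)
  finally show ?thesis
    by simp
qed

section \<open>Cauchy densities\<close>

lemma cauchy_pdf_pos: "s > 0 \<Longrightarrow> cauchy_pdf l s x > 0"
  unfolding cauchy_pdf_def by (auto intro!: divide_pos_pos mult_pos_pos add_pos_nonneg)

lemma continuous_on_cauchy_pdf: "s > 0 \<Longrightarrow> continuous_on A (cauchy_pdf l s)"
  unfolding cauchy_pdf_def by (intro continuous_intros) (auto simp: add_pos_nonneg)

lemma cauchy_pdf_standardize:
  assumes "s > 0"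
  shows "cauchy_pdf l s (l + s * y) = inverse (1 + y\<^sup>2) / (pi * s)"
proof -
  have "s\<^sup>2 + (l + s * y - l)\<^sup>2 = s * (s * (1 + y\<^sup>2))"
    by (simp add: algebra_simps power2_eq_square)
  then show ?thesis
    unfolding cauchy_pdf_def using assms by (simp add: divide_simps)
qed

lemma integrable_cauchy_pdf:
  assumes "s > 0"
  shows "integrable lborel (cauchy_pdf l s)"
proof -
  have "integrable lborel (\<lambda>y. cauchy_pdf l s (l + s * y))"
    using integrable_inverse_1_plus_square assms by (simp add: cauchy_pdf_standardize set_integrable_def)
  then show ?thesis
    using lborel_integrable_real_affine_iff[of s "cauchy_pdf l s" l] assms by simp
qed

lemma integral_cauchy_pdf:
  assumes "s > 0"
  shows "(\<integral>x. cauchy_pdf l s x \<partial>lborel) = 1"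
proof -
  have "(\<integral>x. cauchy_pdf l s x \<partial>lborel) = s * (\<integral>y. cauchy_pdf l s (l + s * y) \<partial>lborel)"
    using lborel_integral_real_affine[of s "cauchy_pdf l s" l] assms by simp
  also have "\<dots> = s * ((\<integral>y. inverse (1 + y\<^sup>2) \<partial>lborel) / (pi * s))"
    using assms by (simp add: cauchy_pdf_standardize)
  also have "(\<integral>y. inverse (1 + y\<^sup>2) \<partial>lborel) = pi"
    using LBINT_inverse_1_plus_square
    by (simp add: interval_lebesgue_integral_def set_lebesgue_integral_def)
  finally show ?thesis
    using assms by simp
qed

lemma cauchy_pdf_reflect: "cauchy_pdf l s (c - y) = cauchy_pdf (c - l) s y"
proof -
  have "c - y - l = - (y - (c - l))"
    by simp
  then show ?thesis
    unfolding cauchy_pdf_def by (simp only: power2_minus)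
qed

text \<open>
  The points \<open>m + (k + i) s\<close> and \<open>m + (k + i) s'\<close> of the upper half-plane lie on one ray
  from \<open>m\<close>, at distances whose product is \<open>R\<close>; the inversion in the circle of radius
  \<open>sqrt R\<close> about \<open>m\<close> exchanges them, and it transports the Cauchy law with the one
  location-scale pair to the Cauchy law with the other.
\<close>

lemma cauchy_pdf_inversion:
  fixes s s' k m y :: real
  assumes s: "s > 0" and s': "s' > 0" and y: "y \<noteq> m"
  defines "R \<equiv> s * s' * (1 + k\<^sup>2)"
  shows "R / (y - m)\<^sup>2 * cauchy_pdf (m + k * s) s (m + R / (y - m)) = cauchy_pdf (m + k * s') s' y"
proof -
  define w where "w = y - m"
  have w: "w \<noteq> 0"
    using y by (simp add: w_def)
  have "s\<^sup>2 + (m + R / w - (m + k * s))\<^sup>2 = (s\<^sup>2 * w\<^sup>2 + (R - k * s * w)\<^sup>2) / w\<^sup>2"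
    using w by (simp add: field_simps power2_eq_square)
  then have "R / w\<^sup>2 * cauchy_pdf (m + k * s) s (m + R / w) = R * s / (pi * (s\<^sup>2 * w\<^sup>2 + (R - k * s * w)\<^sup>2))"
    unfolding cauchy_pdf_def using w by simp
  also have "\<dots> = s' / (pi * (s'\<^sup>2 + (k * s' - w)\<^sup>2))"
  proof -
    have "R * s * (s'\<^sup>2 + (k * s' - w)\<^sup>2) = s' * (s\<^sup>2 * w\<^sup>2 + (R - k * s * w)\<^sup>2)"
      unfolding R_def by (simp add: algebra_simps power2_eq_square)
    moreover have "s\<^sup>2 * w\<^sup>2 + (R - k * s * w)\<^sup>2 > 0" "s'\<^sup>2 + (k * s' - w)\<^sup>2 > 0"
      using s s' w by (simp_all add: add_pos_nonneg)
    ultimately show ?thesis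
      using s' by (simp add: divide_simps)
  qed
  also have "\<dots> = cauchy_pdf (m + k * s') s' y"
    unfolding cauchy_pdf_def w_def by (simp add: power2_commute diff_diff_eq)
  finally show ?thesis
    unfolding w_def .
qed

lemma cauchy_pdf_inject:
  assumes s1: "s1 > 0" and s2: "s2 > 0" and eq: "cauchy_pdf l1 s1 = cauchy_pdf l2 s2"
  shows "l1 = l2 \<and> s1 = s2"
proof -
  have "1 / (pi * s1) = s2 / (pi * (s2\<^sup>2 + (l1 - l2)\<^sup>2))"
    using fun_cong[OF eq, of l1] s1 unfolding cauchy_pdf_def by (simp add: power2_eq_square)
  then have "pi * (s2\<^sup>2 + (l1 - l2)\<^sup>2) = pi * (s1 * s2)"
    using s1 s2 by (simp add: divide_simps add_pos_nonneg)
  then have a: "s2\<^sup>2 + (l1 - l2)\<^sup>2 = s1 * s2"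
    by simp
  have "s1 / (pi * (s1\<^sup>2 + (l2 - l1)\<^sup>2)) = 1 / (pi * s2)"
    using fun_cong[OF eq, of l2] s2 unfolding cauchy_pdf_def by (simp add: power2_eq_square)
  then have "pi * (s1\<^sup>2 + (l2 - l1)\<^sup>2) = pi * (s1 * s2)"
    using s1 s2 by (simp add: divide_simps add_pos_nonneg)
  then have b: "s1\<^sup>2 + (l1 - l2)\<^sup>2 = s1 * s2"
    by (simp add: power2_commute)
  have "s1\<^sup>2 = s2\<^sup>2"
    using a b by simp
  then have "s1 = s2"
    using s1 s2 by (simp add: power2_eq_iff)
  then show ?thesis
    using a by (simp add: power2_eq_square)
qed

lemma chernoff_coeff_cauchy_swap:
  assumes s1: "s1 > 0" and s2: "s2 > 0" and \<alpha>: "0 \<le> \<alpha>" "\<alpha> \<le> 1"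
  shows "chernoff_coeff (cauchy_pdf l1 s1) (cauchy_pdf l2 s2) \<alpha>
       = chernoff_coeff (cauchy_pdf l2 s2) (cauchy_pdf l1 s1) \<alpha>"
proof (cases "s1 = s2")
  case True
  show ?thesis
  proof (rule chernoff_coeff_swap_by_reflection[where c = "l1 + l2"])
    show "cauchy_pdf l1 s1 (l1 + l2 - y) = cauchy_pdf l2 s2 y"
      and "cauchy_pdf l2 s2 (l1 + l2 - y) = cauchy_pdf l1 s1 y" for y
      using True by (simp_all add: cauchy_pdf_reflect)
  qed (simp_all add: integrable_cauchy_pdf cauchy_pdf_pos s1 s2 \<alpha>)
next
  case False
  \<comment> \<open>\<open>m\<close> is where the line through \<open>l1 + i s1\<close> and \<open>l2 + i s2\<close> meets the real axis\<close>
  define k where "k = (l1 - l2) / (s1 - s2)"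
  define m where "m = l1 - k * s1"
  have "s1 - s2 \<noteq> 0"
    using False by simp
  then have "k * (s1 - s2) = l1 - l2"
    by (simp add: k_def)
  then have l1: "l1 = m + k * s1" and l2: "l2 = m + k * s2"
    by (simp_all add: m_def algebra_simps)
  show ?thesis
  proof (rule chernoff_coeff_swap_by_inversion[where m = m and R = "s1 * s2 * (1 + k\<^sup>2)"])
    show "s1 * s2 * (1 + k\<^sup>2) > 0"
      using s1 s2 by (simp add: add_pos_nonneg)
    show "s1 * s2 * (1 + k\<^sup>2) / (y - m)\<^sup>2 * cauchy_pdf l1 s1 (m + s1 * s2 * (1 + k\<^sup>2) / (y - m))
        = cauchy_pdf l2 s2 y" if "y \<noteq> m" for y
      unfolding l1 l2 using s1 s2 that by (rule cauchy_pdf_inversion)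
    show "s1 * s2 * (1 + k\<^sup>2) / (y - m)\<^sup>2 * cauchy_pdf l2 s2 (m + s1 * s2 * (1 + k\<^sup>2) / (y - m))
        = cauchy_pdf l1 s1 y" if "y \<noteq> m" for y
      unfolding l1 l2 mult.commute[of s1 s2] using s2 s1 that by (rule cauchy_pdf_inversion)
  qed (simp_all add: integrable_cauchy_pdf cauchy_pdf_pos s1 s2 \<alpha>)
qed

lemma rho_eq_chernoff_coeff:
  "rho \<alpha> l1 s1 l2 s2 = chernoff_coeff (cauchy_pdf l1 s1) (cauchy_pdf l2 s2) \<alpha>"
  unfolding rho_def chernoff_coeff_def ..

lemma rho_one_minus:
  assumes "s1 > 0" "s2 > 0" "0 \<le> \<alpha>" "\<alpha> \<le> 1"
  shows "rho \<alpha> l1 s1 l2 s2 = rho (1 - \<alpha>) l1 s1 l2 s2"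
  unfolding rho_eq_chernoff_coeff chernoff_coeff_commute[symmetric]
  using assms by (rule chernoff_coeff_cauchy_swap)

lemma D_B_less_D_B_half:
  assumes s1: "s1 > 0" and s2: "s2 > 0" and "(l1, s1) \<noteq> (l2, s2)"
    and \<alpha>: "0 \<le> \<alpha>" "\<alpha> \<le> 1" "\<alpha> \<noteq> 1/2"
  shows "D_B \<alpha> l1 s1 l2 s2 < D_B (1/2) l1 s1 l2 s2"
proof -
  have "cauchy_pdf l1 s1 \<noteq> cauchy_pdf l2 s2"
    using cauchy_pdf_inject[OF s1 s2] assms(3) by blast
  then have "rho (1/2) l1 s1 l2 s2 < rho \<alpha> l1 s1 l2 s2"
    unfolding rho_eq_chernoff_coeff
    using chernoff_coeff_cauchy_swap[OF s1 s2 \<alpha>(1,2)] s1 s2 \<alpha>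
    by (intro chernoff_coeff_half_less)
      (simp_all add: integrable_cauchy_pdf cauchy_pdf_pos continuous_on_cauchy_pdf)
  moreover have "rho (1/2) l1 s1 l2 s2 > 0"
    unfolding rho_eq_chernoff_coeff using s1 s2
    by (intro chernoff_coeff_pos) (simp_all add: integrable_cauchy_pdf cauchy_pdf_pos)
  ultimately show ?thesis
    unfolding D_B_def by simp
qed

lemma D_C_eq_D_B_if_maximal:
  assumes "0 \<le> \<alpha>\<^sub>0" "\<alpha>\<^sub>0 \<le> 1" "\<And>\<alpha>. 0 \<le> \<alpha> \<Longrightarrow> \<alpha> \<le> 1 \<Longrightarrow> D_B \<alpha> l1 s1 l2 s2 \<le> D_B \<alpha>\<^sub>0 l1 s1 l2 s2"
  shows "D_C l1 s1 l2 s2 = D_B \<alpha>\<^sub>0 l1 s1 l2 s2"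
  unfolding D_C_def using assms by (intro cSup_eq_maximum) auto

lemma D_C_eq_D_B_half:
  assumes "s1 > 0" "s2 > 0" "(l1, s1) \<noteq> (l2, s2)"
  shows "D_C l1 s1 l2 s2 = D_B (1/2) l1 s1 l2 s2"
proof (rule D_C_eq_D_B_if_maximal)
  show "D_B \<alpha> l1 s1 l2 s2 \<le> D_B (1/2) l1 s1 l2 s2" if "0 \<le> \<alpha>" "\<alpha> \<le> 1" for \<alpha>
  proof (cases "\<alpha> = 1/2")
    case True
    then show ?thesis
      by (simp only: order.refl)
  next
    case False
    then show ?thesis
      using D_B_less_D_B_half[OF assms that] by simp
  qed
qed simp_all

lemma D_B_self: "s > 0 \<Longrightarrow> D_B \<alpha> l s l s = 0"
  unfolding D_B_def rho_eq_chernoff_coeff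
  by (simp add: chernoff_coeff_self cauchy_pdf_pos integral_cauchy_pdf)

theorem propositionA2:
  fixes l1 s1 l2 s2 :: real
  assumes "s1 > 0" and "s2 > 0"
  shows "(\<forall>\<alpha>\<in>{0..1}. rho \<alpha> l1 s1 l2 s2 = rho (1 - \<alpha>) l1 s1 l2 s2)
     \<and> ((l1, s1) \<noteq> (l2, s2) \<longrightarrow>
          (\<forall>\<alpha>\<in>{0..1}. \<alpha> \<noteq> 1/2 \<longrightarrow> D_B \<alpha> l1 s1 l2 s2 < D_B (1/2) l1 s1 l2 s2)
          \<and> D_C l1 s1 l2 s2 = D_B (1/2) l1 s1 l2 s2)
     \<and> ((l1, s1) = (l2, s2) \<longrightarrow>
          (\<forall>\<alpha>\<in>{0..1}. D_B \<alpha> l1 s1 l2 s2 = 0)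
          \<and> (\<forall>\<alpha>\<in>{0..1}. D_B \<alpha> l1 s1 l2 s2 = D_C l1 s1 l2 s2))"
proof (intro conjI impI ballI)
  show "rho \<alpha> l1 s1 l2 s2 = rho (1 - \<alpha>) l1 s1 l2 s2" if "\<alpha> \<in> {0..1}" for \<alpha>
    using assms that by (intro rho_one_minus) auto
next
  assume distinct: "(l1, s1) \<noteq> (l2, s2)"
  show "D_B \<alpha> l1 s1 l2 s2 < D_B (1/2) l1 s1 l2 s2" if "\<alpha> \<in> {0..1}" "\<alpha> \<noteq> 1/2" for \<alpha>
    using assms distinct that by (intro D_B_less_D_B_half) auto
  show "D_C l1 s1 l2 s2 = D_B (1/2) l1 s1 l2 s2"
    using assms distinct by (rule D_C_eq_D_B_half)
next
  assume "(l1, s1) = (l2, s2)"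
  then have zero: "D_B \<alpha> l1 s1 l2 s2 = 0" for \<alpha>
    using assms by (simp add: D_B_self)
  then show "D_B \<alpha> l1 s1 l2 s2 = 0" for \<alpha> .
  show "D_B \<alpha> l1 s1 l2 s2 = D_C l1 s1 l2 s2" if "\<alpha> \<in> {0..1}" for \<alpha>
    using D_C_eq_D_B_if_maximal[of \<alpha> l1 s1 l2 s2] that zero by simp
qed

end
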